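(* Let $\rho$ be a state of $A$ and $\sigma$ a state of $B$, and let $\mathcal{H}_S:=\mathrm{supp}\,\mathcal{G}(\sigma)\subseteq\mathcal{H}_B$, regarded as a system $S$ carrying the restriction of $U_B$ (this subspace is invariant under every $U_B(g)$). Then there exists a $G$-covariant channel from $A$ to $B$ mapping $\rho$ to $\sigma$ if and only if there exists a $G$-covariant channel from $A$ to $S$ mapping $\rho$ to $\sigma$.
   Context: $G$ is a compact group with normalized Haar measure $dg$; finite-dimensional systems $A,B$ carry continuous unitary representations $U_A,U_B$. $\mathcal{G}(\sigma)=\int dg\,U_B(g)\sigma U_B(g)^\dagger$. A channel $\mathcal{E}$ from $X$ to $Y$ is $G$-covariant if $\mathcal{E}(U_X(g)MU_X(g)^\dagger)=U_Y(g)\mathcal{E}(M)U_Y(g)^\dagger$ for all $g$ and $M$. *)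

theory Defs
  imports "HOL-Probability.Probability" "Jordan_Normal_Form.Matrix"
begin

definition adj :: "complex mat \<Rightarrow> complex mat" where
  "adj A = mat (dim_col A) (dim_row A) (\<lambda>(i,j). cnj (A $$ (j,i)))"

definition psd :: "nat \<Rightarrow> complex mat \<Rightarrow> bool" where
  "psd d M \<longleftrightarrow> M \<in> carrier_mat d d \<and>
     (\<forall>v \<in> carrier_vec d. let z = (\<Sum>i<d. cnj (vec_index v i) * vec_index (M *\<^sub>v v) i) in Im z = 0 \<and> Re z \<ge> 0)"

definition tr :: "complex mat \<Rightarrow> complex" where
  "tr M = (\<Sum>i<dim_row M. M $$ (i,i))"

definition state :: "nat \<Rightarrow> complex mat \<Rightarrow> bool" where
  "state d \<rho> \<longleftrightarrow> psd d \<rho> \<and> tr \<rho> = 1"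

(* range (support, for psd matrices) of a matrix *)
definition supp :: "complex mat \<Rightarrow> complex vec set" where
  "supp M = {M *\<^sub>v v | v. v \<in> carrier_vec (dim_col M)}"

(* (Phi \<otimes> id_n) applied to M on C^dX \<otimes> C^n, index of e_k \<otimes> e_a is k*n+a *)
definition ampl :: "nat \<Rightarrow> nat \<Rightarrow> nat \<Rightarrow> (complex mat \<Rightarrow> complex mat) \<Rightarrow> complex mat \<Rightarrow> complex mat" where
  "ampl dX dY n \<Phi> M = mat (dY * n) (dY * n)
     (\<lambda>(i,j). \<Phi> (mat dX dX (\<lambda>(k,l). M $$ (k * n + i mod n, l * n + j mod n))) $$ (i div n, j div n))"

definition channel :: "nat \<Rightarrow> nat \<Rightarrow> (complex mat \<Rightarrow> complex mat) \<Rightarrow> bool" where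
  "channel dX dY \<Phi> \<longleftrightarrow>
     (\<forall>M \<in> carrier_mat dX dX. \<Phi> M \<in> carrier_mat dY dY) \<and>
     (\<forall>M \<in> carrier_mat dX dX. \<forall>N \<in> carrier_mat dX dX. \<Phi> (M + N) = \<Phi> M + \<Phi> N) \<and>
     (\<forall>M \<in> carrier_mat dX dX. \<forall>c. \<Phi> (c \<cdot>\<^sub>m M) = c \<cdot>\<^sub>m \<Phi> M) \<and>
     (\<forall>M \<in> carrier_mat dX dX. tr (\<Phi> M) = tr M) \<and>
     (\<forall>n. \<forall>M. psd (dX * n) M \<longrightarrow> psd (dY * n) (ampl dX dY n \<Phi> M))"

definition unitary_rep :: "nat \<Rightarrow> ('g::{group_add,topological_space} \<Rightarrow> complex mat) \<Rightarrow> bool" where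
  "unitary_rep d U \<longleftrightarrow>
     (\<forall>g. U g \<in> carrier_mat d d \<and> adj (U g) * U g = 1\<^sub>m d) \<and>
     (\<forall>g h. U (g + h) = U g * U h) \<and>
     (\<forall>i<d. \<forall>j<d. continuous_on UNIV (\<lambda>g. U g $$ (i,j)))"

definition cov_channel :: "nat \<Rightarrow> nat \<Rightarrow> ('g \<Rightarrow> complex mat) \<Rightarrow> ('g \<Rightarrow> complex mat)
     \<Rightarrow> (complex mat \<Rightarrow> complex mat) \<Rightarrow> bool" where
  "cov_channel dX dY UX UY \<Phi> \<longleftrightarrow> channel dX dY \<Phi> \<and>
     (\<forall>g. \<forall>M \<in> carrier_mat dX dX. \<Phi> (UX g * M * adj (UX g)) = UY g * \<Phi> M * adj (UY g))"

definition haar_prob :: "('g::{group_add,topological_space}) measure \<Rightarrow> bool" where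
  "haar_prob \<mu> \<longleftrightarrow> prob_space \<mu> \<and> sets \<mu> = sets borel \<and>
     (\<forall>h. distr \<mu> \<mu> (\<lambda>g. h + g) = \<mu>) \<and>
     (\<forall>A \<in> sets borel. emeasure \<mu> A = (INF U \<in> {U. open U \<and> A \<subseteq> U}. emeasure \<mu> U)) \<and>
     (\<forall>U. open U \<longrightarrow> emeasure \<mu> U = (SUP K \<in> {K. compact K \<and> K \<subseteq> U}. emeasure \<mu> K))"

definition twirl :: "'g measure \<Rightarrow> ('g \<Rightarrow> complex mat) \<Rightarrow> complex mat \<Rightarrow> complex mat" where
  "twirl \<mu> U \<sigma> = mat (dim_row \<sigma>) (dim_col \<sigma>)
     (\<lambda>(i,j). integral\<^sup>L \<mu> (\<lambda>g. (U g * \<sigma> * adj (U g)) $$ (i,j)))"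

end

theory Submission
  imports Defs "Jordan_Normal_Form.Determinant"
begin

text \<open>Let \<open>P = V V\<^sup>\<dagger>\<close> project onto \<open>S = supp \<G>(\<sigma>)\<close> and \<open>Q = 1 - P\<close>. The twirl \<open>\<G>(\<sigma>)\<close> commutes
  with every \<open>U\<^sub>B(g)\<close>, so \<open>S\<close> is invariant and \<open>U\<^sub>B(g) V = V W(g)\<close> with the unitary representation
  \<open>W(g) = V\<^sup>\<dagger> U\<^sub>B(g) V\<close> of \<open>G\<close> on \<open>S\<close>. Since the Haar measure has full support, a vector \<open>f\<close> with
  \<open>\<langle>f, \<G>(\<sigma>) f\<rangle> = 0\<close> satisfies \<open>\<langle>f, U(g) \<sigma> U(g)\<^sup>\<dagger> f\<rangle> = 0\<close> for all \<open>g\<close>, in particular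
  \<open>\<langle>f, \<sigma> f\<rangle> = 0\<close>; hence \<open>Q \<sigma> = 0\<close> and \<open>\<sigma> = P \<sigma> P\<close>. Post-composing with the embedding
  \<open>X \<mapsto> V X V\<^sup>\<dagger>\<close> turns a covariant channel into \<open>S\<close> into one into \<open>B\<close>; post-composing with the
  compression \<open>Y \<mapsto> V\<^sup>\<dagger> Y V + tr (Q Y Q) / d\<^sub>S \<cdot> 1\<close> goes back. Both are covariant because \<open>V\<close>
  intertwines \<open>W\<close> with \<open>U\<^sub>B\<close>, and they exchange \<open>\<sigma>\<close> and \<open>V\<^sup>\<dagger> \<sigma> V\<close>.\<close>

section \<open>Matrix algebra\<close>

lemma index_mult_mat_sum:
  assumes "A \<in> carrier_mat n m" "B \<in> carrier_mat m p" "i < n" "j < p"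
  shows "(A * B) $$ (i,j) = (\<Sum>k<m. A $$ (i,k) * B $$ (k,j))"
  using assms by (auto simp: scalar_prod_def lessThan_atLeast0 intro!: sum.cong)

lemma index_mult_mat_vec_sum:
  assumes "A \<in> carrier_mat n m" "v \<in> carrier_vec m" "i < n"
  shows "(A *\<^sub>v v) $ i = (\<Sum>k<m. A $$ (i,k) * v $ k)"
  using assms by (auto simp: scalar_prod_def lessThan_atLeast0 intro!: sum.cong)

lemma index_sandwich_sum:
  assumes "A \<in> carrier_mat d d" "K \<in> carrier_mat d' d" "i < d'" "j < d'"
  shows "(K * A * adj K) $$ (i,j) = (\<Sum>l<d. (\<Sum>k<d. K $$ (i,k) * A $$ (k,l)) * cnj (K $$ (j,l)))"
proof -
  have "(K * A * adj K) $$ (i,j) = (\<Sum>l<d. (K * A) $$ (i,l) * adj K $$ (l,j))"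
    using assms by (intro index_mult_mat_sum) (auto simp: adj_def)
  also have "\<dots> = (\<Sum>l<d. (\<Sum>k<d. K $$ (i,k) * A $$ (k,l)) * cnj (K $$ (j,l)))"
    using assms index_mult_mat_sum[OF assms(2,1)] by (auto simp: adj_def intro!: sum.cong)
  finally show ?thesis .
qed

lemma adj_carrier [simp]: "A \<in> carrier_mat n m \<Longrightarrow> adj A \<in> carrier_mat m n"
  by (auto simp: adj_def)

lemma dim_adj [simp]: "dim_row (adj A) = dim_col A" "dim_col (adj A) = dim_row A"
  by (auto simp: adj_def)

lemma index_adj [simp]: "i < dim_col A \<Longrightarrow> j < dim_row A \<Longrightarrow> adj A $$ (i,j) = cnj (A $$ (j,i))"
  by (auto simp: adj_def)

lemma adj_adj [simp]: "adj (adj A) = A"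
  by (auto simp: adj_def)

lemma adj_one [simp]: "adj (1\<^sub>m n) = 1\<^sub>m n"
  by (auto simp: adj_def)

lemma adj_minus:
  "A \<in> carrier_mat n m \<Longrightarrow> B \<in> carrier_mat n m \<Longrightarrow> adj (A - B) = adj A - adj B"
  by (auto simp: adj_def)

lemma adj_mult:
  assumes "dim_col A = dim_row B"
  shows "adj (A * B) = adj B * adj A"
proof -
  define n m p where "n = dim_row A" and "m = dim_col A" and "p = dim_col B"
  have A: "A \<in> carrier_mat n m" and B: "B \<in> carrier_mat m p"
    using assms by (auto simp: n_def m_def p_def)
  show ?thesis
  proof (rule eq_matI)
    fix i j assume "i < dim_row (adj B * adj A)" "j < dim_col (adj B * adj A)"
    then have ij: "i < p" "j < n" using A B by auto
    have "adj (A * B) $$ (i, j) = cnj (\<Sum>k<m. A $$ (j,k) * B $$ (k,i))"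
      using ij A B index_mult_mat_sum[OF A B ij(2,1)] by simp
    also have "\<dots> = (\<Sum>k<m. adj B $$ (i,k) * adj A $$ (k,j))"
      using ij A B by (simp add: mult.commute)
    also have "\<dots> = (adj B * adj A) $$ (i, j)"
      using index_mult_mat_sum[OF adj_carrier[OF B] adj_carrier[OF A] ij] by simp
    finally show "adj (A * B) $$ (i, j) = (adj B * adj A) $$ (i, j)" .
  qed (use A B in auto)
qed

lemma tr_mult_comm:
  assumes "A \<in> carrier_mat n m" "B \<in> carrier_mat m n"
  shows "tr (A * B) = tr (B * A)"
proof -
  have "tr (A * B) = (\<Sum>i<n. \<Sum>k<m. A $$ (i,k) * B $$ (k,i))"
    using assms index_mult_mat_sum[OF assms] by (auto simp: tr_def intro!: sum.cong)
  also have "\<dots> = (\<Sum>k<m. \<Sum>i<n. B $$ (k,i) * A $$ (i,k))"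
    by (subst sum.swap) (simp add: mult.commute)
  also have "\<dots> = tr (B * A)"
    using assms index_mult_mat_sum[OF assms(2,1)] by (auto simp: tr_def intro!: sum.cong)
  finally show ?thesis .
qed

lemma tr_add: "A \<in> carrier_mat n n \<Longrightarrow> B \<in> carrier_mat n n \<Longrightarrow> tr (A + B) = tr A + tr B"
  by (auto simp: tr_def sum.distrib)

lemma tr_minus: "A \<in> carrier_mat n n \<Longrightarrow> B \<in> carrier_mat n n \<Longrightarrow> tr (A - B) = tr A - tr B"
  by (auto simp: tr_def sum_subtractf)

lemma tr_smult: "A \<in> carrier_mat n n \<Longrightarrow> tr (c \<cdot>\<^sub>m A) = c * tr A"
  by (auto simp: tr_def sum_distrib_left)

lemma tr_one: "tr (1\<^sub>m n :: complex mat) = of_nat n"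
  by (simp add: tr_def)

lemma eq_mat_mult_vecI:
  fixes A B :: "complex mat"
  assumes "A \<in> carrier_mat n m" "B \<in> carrier_mat n m"
    and "\<And>v. v \<in> carrier_vec m \<Longrightarrow> A *\<^sub>v v = B *\<^sub>v v"
  shows "A = B"
proof (rule eq_matI)
  fix i j assume ij: "i < dim_row B" "j < dim_col B"
  have col: "(C *\<^sub>v unit_vec m j) $ i = C $$ (i,j)" if "C \<in> carrier_mat n m" for C :: "complex mat"
    using that ij assms by (subst index_mult_mat_vec_sum[OF that]) (auto simp: if_distrib cong: if_cong)
  show "A $$ (i, j) = B $$ (i, j)"
    using assms(3)[of "unit_vec m j"] col[OF assms(1)] col[OF assms(2)] by simp
qed (use assms in auto)

lemma mult_assoc_dims:
  fixes A B C :: "complex mat"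
  shows "dim_col A = dim_row B \<Longrightarrow> dim_col B = dim_row C \<Longrightarrow> A * B * C = A * (B * C)"
  by (rule assoc_mult_mat[of A "dim_row A" "dim_col A" B "dim_col B" C "dim_col C"]; rule carrier_matI; simp)

lemma mult_add_distrib_dims:
  fixes A B C :: "complex mat"
  shows "dim_col A = dim_row B \<Longrightarrow> dim_row B = dim_row C \<Longrightarrow> dim_col B = dim_col C \<Longrightarrow> A * (B + C) = A * B + A * C"
    and "dim_col A = dim_row C \<Longrightarrow> dim_row A = dim_row B \<Longrightarrow> dim_col A = dim_col B \<Longrightarrow> (A + B) * C = A * C + B * C"
   apply (rule mult_add_distrib_mat[of A "dim_row A" "dim_col A" B "dim_col B" C]; rule carrier_matI; simp)
  apply (rule add_mult_distrib_mat[of A "dim_row A" "dim_col A" B C "dim_col C"]; rule carrier_matI; simp)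
  done

lemma minus_zero_mat_right [simp]: "A \<in> carrier_mat n m \<Longrightarrow> A - 0\<^sub>m n m = (A :: complex mat)"
  by (intro eq_matI) auto

lemma minus_eq_zero_mat_iff:
  fixes A B :: "complex mat"
  assumes "A \<in> carrier_mat n m" "B \<in> carrier_mat n m"
  shows "A - B = 0\<^sub>m n m \<longleftrightarrow> A = B"
proof
  assume "A - B = 0\<^sub>m n m"
  then have "(A - B) $$ (i,j) = 0" if "i < n" "j < m" for i j
    using that by simp
  then show "A = B" using assms by (intro eq_matI) auto
qed (use assms in simp)

lemma mult_smult_dims:
  fixes A B :: "complex mat"
  shows "dim_col A = dim_row B \<Longrightarrow> A * (c \<cdot>\<^sub>m B) = c \<cdot>\<^sub>m (A * B)"
    and "dim_col A = dim_row B \<Longrightarrow> (c \<cdot>\<^sub>m A) * B = c \<cdot>\<^sub>m (A * B)"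
  by (intro eq_matI; simp)+

definition unitary :: "nat \<Rightarrow> complex mat \<Rightarrow> bool" where
  "unitary n U \<longleftrightarrow> U \<in> carrier_mat n n \<and> adj U * U = 1\<^sub>m n"

lemma unitary_mult_adj: "unitary n U \<Longrightarrow> U * adj U = 1\<^sub>m n"
  unfolding unitary_def using mat_mult_left_right_inverse[OF adj_carrier] by blast

lemma unitary_adj_mult_cancel:
  assumes "unitary n U" "dim_row X = n"
  shows "adj U * (U * X) = X"
proof -
  have U: "U \<in> carrier_mat n n" "adj U * U = 1\<^sub>m n" using assms(1) by (auto simp: unitary_def)
  then show ?thesis using assms(2) carrier_matD[OF U(1)] by (simp flip: mult_assoc_dims)
qed

lemma tr_unitary_sandwich:
  assumes U: "unitary n U" and X: "X \<in> carrier_mat n n"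
  shows "tr (U * X * adj U) = tr X"
proof -
  have U': "U \<in> carrier_mat n n" "adj U * U = 1\<^sub>m n" using U by (auto simp: unitary_def)
  have "tr (U * X * adj U) = tr (U * (X * adj U))" using U' X by (simp add: mult_assoc_dims)
  also have "\<dots> = tr (X * adj U * U)" using U' X by (intro tr_mult_comm) auto
  also have "\<dots> = tr X" using U' X by (simp add: mult_assoc_dims)
  finally show ?thesis .
qed

section \<open>Positive semidefinite matrices\<close>

definition nonneg_complex :: "complex \<Rightarrow> bool" where
  "nonneg_complex z \<longleftrightarrow> Im z = 0 \<and> 0 \<le> Re z"

definition sesq :: "nat \<Rightarrow> complex mat \<Rightarrow> (nat \<Rightarrow> complex) \<Rightarrow> (nat \<Rightarrow> complex) \<Rightarrow> complex" where
  "sesq d M f g = (\<Sum>i<d. \<Sum>j<d. cnj (f i) * M $$ (i,j) * g j)"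

lemma nonneg_complex_sum: "(\<And>x. x \<in> A \<Longrightarrow> nonneg_complex (f x)) \<Longrightarrow> nonneg_complex (sum f A)"
  by (auto simp: nonneg_complex_def Im_sum Re_sum intro: sum_nonneg)

lemma sesq_eq_inner_mult_vec:
  assumes "M \<in> carrier_mat d d"
  shows "sesq d M f f = (\<Sum>i<d. cnj (vec d f $ i) * (M *\<^sub>v vec d f) $ i)"
proof -
  have "(M *\<^sub>v vec d f) $ i = (\<Sum>j<d. M $$ (i,j) * f j)" if "i < d" for i
    using index_mult_mat_vec_sum[OF assms _ that, of "vec d f"] by simp
  then show ?thesis unfolding sesq_def by (simp add: sum_distrib_left mult.assoc)
qed

lemma psd_iff_sesq: "psd d M \<longleftrightarrow> M \<in> carrier_mat d d \<and> (\<forall>f. nonneg_complex (sesq d M f f))"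
proof -
  have vecs: "(\<forall>v\<in>carrier_vec d. P v) \<longleftrightarrow> (\<forall>f. P (vec d f))" for P :: "complex vec \<Rightarrow> bool"
  proof
    assume "\<forall>f. P (vec d f)"
    moreover have "v = vec d (($) v)" if "v \<in> carrier_vec d" for v :: "complex vec"
      using that by (auto intro!: eq_vecI)
    ultimately show "\<forall>v\<in>carrier_vec d. P v" by metis
  qed simp
  show ?thesis
    unfolding psd_def Let_def nonneg_complex_def vecs by (auto simp: sesq_eq_inner_mult_vec)
qed

lemma sesq_sandwich:
  assumes A: "A \<in> carrier_mat d d" and K: "K \<in> carrier_mat d' d"
  shows "sesq d' (K * A * adj K) f g =
         sesq d A (\<lambda>k. \<Sum>i<d'. cnj (K $$ (i,k)) * f i) (\<lambda>k. \<Sum>i<d'. cnj (K $$ (i,k)) * g i)"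
proof -
  let ?T = "\<lambda>i j k l. cnj (f i) * K $$ (i,k) * A $$ (k,l) * cnj (K $$ (j,l)) * g j"
  have "sesq d' (K * A * adj K) f g = (\<Sum>i<d'. \<Sum>j<d'. \<Sum>l<d. \<Sum>k<d. ?T i j k l)"
    unfolding sesq_def
    by (auto simp: index_sandwich_sum[OF A K] sum_distrib_left sum_distrib_right mult.assoc intro!: sum.cong)
  also have "\<dots> = (\<Sum>i<d'. \<Sum>l<d. \<Sum>k<d. \<Sum>j<d'. ?T i j k l)"
    by (rule sum.cong[OF refl], subst sum.swap, rule sum.cong[OF refl], subst sum.swap, simp)
  also have "\<dots> = (\<Sum>l<d. \<Sum>k<d. \<Sum>i<d'. \<Sum>j<d'. ?T i j k l)"
    by (subst sum.swap, rule sum.cong[OF refl], subst sum.swap, simp)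
  also have "\<dots> = (\<Sum>k<d. \<Sum>l<d. \<Sum>i<d'. \<Sum>j<d'. ?T i j k l)"
    by (rule sum.swap)
  also have "\<dots> = sesq d A (\<lambda>k. \<Sum>i<d'. cnj (K $$ (i,k)) * f i) (\<lambda>k. \<Sum>i<d'. cnj (K $$ (i,k)) * g i)"
    unfolding sesq_def by (auto simp: sum_distrib_left sum_distrib_right mult_ac intro!: sum.cong)
  finally show ?thesis .
qed

lemma psd_sandwich: "psd d A \<Longrightarrow> K \<in> carrier_mat d' d \<Longrightarrow> psd d' (K * A * adj K)"
  using sesq_sandwich[of A d K d'] unfolding psd_iff_sesq by auto

lemma sesq_add_left: "sesq d M (\<lambda>i. f i + h i) g = sesq d M f g + sesq d M h g"
  and sesq_add_right: "sesq d M f (\<lambda>i. g i + h i) = sesq d M f g + sesq d M f h"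
  and sesq_scale_left: "sesq d M (\<lambda>i. c * f i) g = cnj c * sesq d M f g"
  and sesq_scale_right: "sesq d M f (\<lambda>i. c * g i) = c * sesq d M f g"
  by (simp_all add: sesq_def algebra_simps sum.distrib sum_distrib_left)

lemma sesq_unit_left:
  assumes "i < d"
  shows "sesq d M (\<lambda>k. if k = i then 1 else 0) g = (\<Sum>j<d. M $$ (i,j) * g j)"
proof -
  have "sesq d M (\<lambda>k. if k = i then 1 else 0) g = (\<Sum>j<d. \<Sum>k<d. if k = i then M $$ (k,j) * g j else 0)"
    unfolding sesq_def by (subst sum.swap) (auto intro!: sum.cong)
  then show ?thesis using assms by simp
qed

lemma sesq_unit_right: "j < d \<Longrightarrow> sesq d M f (\<lambda>k. if k = j then 1 else 0) = (\<Sum>i<d. cnj (f i) * M $$ (i,j))"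
  by (simp add: sesq_def if_distrib cong: if_cong)

lemma linear_coeff_zero_if_quadratic_nonneg:
  fixes a b :: real
  assumes "\<And>t. 0 \<le> t * a + t\<^sup>2 * b" "0 \<le> b"
  shows "a = 0"
proof (rule ccontr)
  assume "a \<noteq> 0"
  define t where "t = - a / (b + 1)"
  have "b + 1 > 0" using assms(2) by simp
  then have "t * a + t\<^sup>2 * b = - (a\<^sup>2 / (b + 1)\<^sup>2)"
    unfolding t_def by (simp add: power2_eq_square divide_simps) (simp add: algebra_simps)
  also have "\<dots> < 0" using \<open>a \<noteq> 0\<close> \<open>b + 1 > 0\<close> by simp
  finally show False using assms(1)[of t] by simp
qed

lemma psd_sesq_eq_zero:
  assumes "psd d M" "sesq d M f f = 0"
  shows "sesq d M g f = 0" "sesq d M f g = 0"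
proof -
  have nn: "nonneg_complex (sesq d M h h)" for h using assms(1) unfolding psd_iff_sesq by blast
  have expand: "sesq d M (\<lambda>i. f i + c * g i) (\<lambda>i. f i + c * g i)
        = cnj c * sesq d M g f + c * sesq d M f g + (cnj c * c) * sesq d M g g" for c
    using assms(2) by (simp add: sesq_add_left sesq_add_right sesq_scale_left sesq_scale_right algebra_simps)
  \<comment> \<open>For \<open>|c| = 1\<close> the form along \<open>f + t c g\<close> is a real quadratic in \<open>t\<close> without constant term.\<close>
  have key: "cnj c * sesq d M g f + c * sesq d M f g = 0" if c: "cnj c * c = 1" for c
  proof -
    let ?a = "cnj c * sesq d M g f + c * sesq d M f g"
    have b: "nonneg_complex (sesq d M g g)" by (rule nn)
    have h: "nonneg_complex (of_real t * ?a + of_real (t\<^sup>2) * sesq d M g g)" for t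
    proof -
      have "sesq d M (\<lambda>i. f i + (of_real t * c) * g i) (\<lambda>i. f i + (of_real t * c) * g i)
            = of_real t * ?a + of_real (t\<^sup>2) * sesq d M g g"
        unfolding expand using c by (simp add: algebra_simps power2_eq_square)
      then show ?thesis using nn by metis
    qed
    have "Im ?a = 0" using h[of 1] b by (simp add: nonneg_complex_def)
    moreover have "Re ?a = 0"
      using h b by (intro linear_coeff_zero_if_quadratic_nonneg) (auto simp: nonneg_complex_def)
    ultimately show ?thesis by (simp add: complex_eq_iff)
  qed
  from key[of 1] key[of "\<i>"] show "sesq d M g f = 0" "sesq d M f g = 0"
    by (simp_all add: algebra_simps)
qed

lemma psd_sandwich_eq_zero:
  assumes A: "psd d A" and K: "K \<in> carrier_mat d' d"
    and null: "\<And>f. sesq d' (K * A * adj K) f f = 0"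
  shows "K * A = 0\<^sub>m d' d" "A * adj K = 0\<^sub>m d d'"
proof -
  have A': "A \<in> carrier_mat d d" using A by (simp add: psd_def)
  define h where "h r = (\<lambda>k. cnj (K $$ (r,k)))" for r
  have "h r = (\<lambda>k. \<Sum>i<d'. cnj (K $$ (i,k)) * (if i = r then 1 else 0))" if "r < d'" for r
    using that by (simp add: h_def if_distrib cong: if_cong)
  then have h_null: "sesq d A (h r) (h r) = 0" if "r < d'" for r
    using sesq_sandwich[OF A' K, of "\<lambda>i. if i = r then 1 else 0" "\<lambda>i. if i = r then 1 else 0"] null that
    by simp
  show "K * A = 0\<^sub>m d' d"
  proof (rule eq_matI)
    fix r j assume "r < dim_row (0\<^sub>m d' d)" "j < dim_col (0\<^sub>m d' d)"
    then have rj: "r < d'" "j < d" by auto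
    have "(K * A) $$ (r,j) = sesq d A (h r) (\<lambda>k. if k = j then 1 else 0)"
      using rj by (simp add: index_mult_mat_sum[OF K A' rj] sesq_unit_right h_def)
    also have "\<dots> = 0" using psd_sesq_eq_zero(2)[OF A h_null[OF rj(1)]] .
    finally show "(K * A) $$ (r,j) = 0\<^sub>m d' d $$ (r,j)" using rj by simp
  qed (use K A' in auto)
  show "A * adj K = 0\<^sub>m d d'"
  proof (rule eq_matI)
    fix i r assume "i < dim_row (0\<^sub>m d d')" "r < dim_col (0\<^sub>m d d')"
    then have ir: "i < d" "r < d'" by auto
    have "(A * adj K) $$ (i,r) = sesq d A (\<lambda>k. if k = i then 1 else 0) (h r)"
      using ir K by (simp add: index_mult_mat_sum[OF A' adj_carrier[OF K] ir] sesq_unit_left h_def)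
    also have "\<dots> = 0" using psd_sesq_eq_zero(1)[OF A h_null[OF ir(2)]] .
    finally show "(A * adj K) $$ (i,r) = 0\<^sub>m d d' $$ (i,r)" using ir by simp
  qed (use K A' in auto)
qed

section \<open>Complete positivity\<close>

definition completely_positive :: "nat \<Rightarrow> nat \<Rightarrow> (complex mat \<Rightarrow> complex mat) \<Rightarrow> bool" where
  "completely_positive dX dY \<Phi> \<longleftrightarrow> (\<forall>n M. psd (dX * n) M \<longrightarrow> psd (dY * n) (ampl dX dY n \<Phi> M))"

lemma channelI:
  assumes "\<And>M. M \<in> carrier_mat dX dX \<Longrightarrow> \<Phi> M \<in> carrier_mat dY dY"
    and "\<And>M N. M \<in> carrier_mat dX dX \<Longrightarrow> N \<in> carrier_mat dX dX \<Longrightarrow> \<Phi> (M + N) = \<Phi> M + \<Phi> N"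
    and "\<And>M c. M \<in> carrier_mat dX dX \<Longrightarrow> \<Phi> (c \<cdot>\<^sub>m M) = c \<cdot>\<^sub>m \<Phi> M"
    and "\<And>M. M \<in> carrier_mat dX dX \<Longrightarrow> tr (\<Phi> M) = tr M"
    and "completely_positive dX dY \<Phi>"
  shows "channel dX dY \<Phi>"
  using assms unfolding channel_def completely_positive_def by blast

lemma ampl_carrier: "ampl dX dY n \<Phi> M \<in> carrier_mat (dY * n) (dY * n)"
  by (simp add: ampl_def)

lemma index_ampl:
  "i < dY * n \<Longrightarrow> j < dY * n \<Longrightarrow> ampl dX dY n \<Phi> M $$ (i,j) =
     \<Phi> (mat dX dX (\<lambda>(k,l). M $$ (k * n + i mod n, l * n + j mod n))) $$ (i div n, j div n)"
  by (simp add: ampl_def)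

lemma block_index_less:
  assumes "k < d" "a < n"
  shows "k * n + a < d * (n::nat)"
proof -
  have "k * n + a < (k + 1) * n" using assms by simp
  also have "\<dots> \<le> d * n" using assms by (intro mult_right_mono) auto
  finally show ?thesis .
qed

lemma ampl_comp:
  assumes \<Phi>: "\<And>X. X \<in> carrier_mat dX dX \<Longrightarrow> \<Phi> X \<in> carrier_mat dY dY"
  shows "ampl dY dZ n \<Psi> (ampl dX dY n \<Phi> M) = ampl dX dZ n (\<Psi> \<circ> \<Phi>) M"
proof (rule eq_matI)
  fix i j assume "i < dim_row (ampl dX dZ n (\<Psi> \<circ> \<Phi>) M)" "j < dim_col (ampl dX dZ n (\<Psi> \<circ> \<Phi>) M)"
  then have ij: "i < dZ * n" "j < dZ * n" by (auto simp: ampl_def)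
  then have rs: "i mod n < n" "j mod n < n" by (cases n; simp)+
  let ?X = "mat dX dX (\<lambda>(k,l). M $$ (k * n + i mod n, l * n + j mod n))"
  have "mat dY dY (\<lambda>(k,l). ampl dX dY n \<Phi> M $$ (k * n + i mod n, l * n + j mod n)) = \<Phi> ?X"
    using \<Phi>[of ?X] rs by (auto simp: index_ampl block_index_less intro!: eq_matI)
  then show "ampl dY dZ n \<Psi> (ampl dX dY n \<Phi> M) $$ (i,j) = ampl dX dZ n (\<Psi> \<circ> \<Phi>) M $$ (i,j)"
    using ij by (simp add: index_ampl)
qed (auto simp: ampl_def)

lemma channel_comp:
  assumes \<Phi>: "channel dX dY \<Phi>" and \<Psi>: "channel dY dZ \<Psi>"
  shows "channel dX dZ (\<Psi> \<circ> \<Phi>)"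
proof (rule channelI)
  have car: "\<And>M. M \<in> carrier_mat dX dX \<Longrightarrow> \<Phi> M \<in> carrier_mat dY dY"
    using \<Phi> by (simp add: channel_def)
  show "completely_positive dX dZ (\<Psi> \<circ> \<Phi>)"
    using \<Phi> \<Psi> by (simp add: completely_positive_def channel_def flip: ampl_comp[OF car])
qed (use \<Phi> \<Psi> in \<open>auto simp: channel_def\<close>)

lemma cov_channel_comp:
  assumes "cov_channel dX dY UX UY \<Phi>" "cov_channel dY dZ UY UZ \<Psi>"
  shows "cov_channel dX dZ UX UZ (\<Psi> \<circ> \<Phi>)"
  using assms channel_comp by (auto simp: cov_channel_def channel_def)

text \<open>\<open>K \<otimes> 1\<^sub>n\<close>, with \<open>e\<^sub>k \<otimes> e\<^sub>a\<close> indexed by \<open>k * n + a\<close> as in \<open>ampl\<close>.\<close>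

definition kron_id :: "complex mat \<Rightarrow> nat \<Rightarrow> complex mat" where
  "kron_id K n = mat (dim_row K * n) (dim_col K * n)
     (\<lambda>(i,j). if i mod n = j mod n then K $$ (i div n, j div n) else 0)"

lemma sum_mod_eq_reindex:
  fixes F :: "nat \<Rightarrow> 'a::comm_monoid_add"
  assumes a: "a < n"
  shows "(\<Sum>p<d * n. if p mod n = a then F p else 0) = (\<Sum>k<d. F (k * n + a))"
proof -
  have "{p. p < d * n \<and> p mod n = a} = (\<lambda>k. k * n + a) ` {..<d}"
  proof (intro equalityI subsetI)
    fix p assume p: "p \<in> {p. p < d * n \<and> p mod n = a}"
    then have "p = (p div n) * n + a" "p div n < d"
      using div_mult_mod_eq[of p n] by (auto simp: less_mult_imp_div_less)
    then show "p \<in> (\<lambda>k. k * n + a) ` {..<d}" by blast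
  qed (use a block_index_less in auto)
  then have "(\<Sum>p<d * n. if p mod n = a then F p else 0) = (\<Sum>p\<in>(\<lambda>k. k * n + a) ` {..<d}. F p)"
    by (simp add: sum.If_cases Int_def lessThan_def conj_commute)
  also have "\<dots> = (\<Sum>k<d. F (k * n + a))"
    by (rule sum.reindex_cong[where l = "\<lambda>k. k * n + a"]) (use a in \<open>auto simp: inj_on_def\<close>)
  finally show ?thesis .
qed

lemma ampl_sandwich:
  assumes K: "K \<in> carrier_mat dY dX" and M: "M \<in> carrier_mat (dX * n) (dX * n)"
  shows "ampl dX dY n (\<lambda>X. K * X * adj K) M = kron_id K n * M * adj (kron_id K n)"
proof (rule eq_matI)
  let ?W = "kron_id K n"
  fix i j assume "i < dim_row (?W * M * adj ?W)" "j < dim_col (?W * M * adj ?W)"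
  then have ij: "i < dY * n" "j < dY * n" using K by (auto simp: kron_id_def)
  then have rs: "i mod n < n" "j mod n < n" by (cases n; simp)+
  have ab: "i div n < dY" "j div n < dY" using ij by (auto simp: less_mult_imp_div_less)
  have W: "?W \<in> carrier_mat (dY * n) (dX * n)" using K by (simp add: kron_id_def)
  have "(?W * M * adj ?W) $$ (i,j) = (\<Sum>l<dX * n. if l mod n = j mod n then
          (\<Sum>k<dX * n. if k mod n = i mod n then K $$ (i div n, k div n) * M $$ (k,l) else 0)
          * cnj (K $$ (j div n, l div n)) else 0)"
    unfolding index_sandwich_sum[OF M W ij] using K ij by (auto simp: kron_id_def intro!: sum.cong)
  also have "\<dots> = (\<Sum>l<dX. (\<Sum>k<dX. K $$ (i div n, k) * M $$ (k * n + i mod n, l * n + j mod n))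
          * cnj (K $$ (j div n, l)))"
    using rs by (simp add: sum_mod_eq_reindex)
  also have "\<dots> = (K * mat dX dX (\<lambda>(k,l). M $$ (k * n + i mod n, l * n + j mod n)) * adj K) $$ (i div n, j div n)"
    unfolding index_sandwich_sum[OF mat_carrier K ab] by (auto intro!: sum.cong)
  also have "\<dots> = ampl dX dY n (\<lambda>X. K * X * adj K) M $$ (i,j)"
    using ij by (simp add: index_ampl)
  finally show "ampl dX dY n (\<lambda>X. K * X * adj K) M $$ (i,j) = (?W * M * adj ?W) $$ (i,j)" ..
qed (use K in \<open>auto simp: ampl_def kron_id_def\<close>)

lemma completely_positive_kraus:
  assumes R: "finite R" and K: "\<And>r. r \<in> R \<Longrightarrow> K r \<in> carrier_mat dY dX"
    and \<Phi>: "\<And>X i j. X \<in> carrier_mat dX dX \<Longrightarrow> i < dY \<Longrightarrow> j < dY \<Longrightarrow>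
        \<Phi> X $$ (i,j) = (\<Sum>r\<in>R. (K r * X * adj (K r)) $$ (i,j))"
  shows "completely_positive dX dY \<Phi>"
  unfolding completely_positive_def
proof (intro allI impI)
  fix n M assume M: "psd (dX * n) M"
  let ?A = "\<lambda>r. ampl dX dY n (\<lambda>X. K r * X * adj (K r)) M"
  have "ampl dX dY n \<Phi> M $$ (i,j) = (\<Sum>r\<in>R. ?A r $$ (i,j))" if "i < dY * n" "j < dY * n" for i j
    using that by (simp add: index_ampl \<Phi> less_mult_imp_div_less)
  then have "sesq (dY * n) (ampl dX dY n \<Phi> M) f f = (\<Sum>r\<in>R. sesq (dY * n) (?A r) f f)" for f
    unfolding sesq_def by (simp add: sum_distrib_left sum_distrib_right sum.swap[of _ R])
  moreover have "psd (dY * n) (?A r)" if "r \<in> R" for r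
  proof -
    have "M \<in> carrier_mat (dX * n) (dX * n)" using M by (simp add: psd_def)
    moreover have "kron_id (K r) n \<in> carrier_mat (dY * n) (dX * n)"
      using K[OF that] by (simp add: kron_id_def)
    ultimately show ?thesis using psd_sandwich[OF M] K[OF that] by (simp add: ampl_sandwich)
  qed
  ultimately show "psd (dY * n) (ampl dX dY n \<Phi> M)"
    unfolding psd_iff_sesq using ampl_carrier by (auto intro: nonneg_complex_sum)
qed

section \<open>Isometries and invariant ranges\<close>

lemma proj_range_mult:
  assumes V: "V \<in> carrier_mat n m" "adj V * V = 1\<^sub>m m"
    and M: "M \<in> carrier_mat n k" and range: "supp M \<subseteq> supp V"
  shows "V * adj V * M = M"
proof (rule eq_mat_mult_vecI[of _ n k])
  fix x :: "complex vec" assume x: "x \<in> carrier_vec k"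
  then obtain z where z: "z \<in> carrier_vec m" "M *\<^sub>v x = V *\<^sub>v z"
    using range M V by (auto simp: supp_def)
  have "adj V *\<^sub>v (V *\<^sub>v z) = z"
    using assoc_mult_mat_vec[OF adj_carrier[OF V(1)] V(1) z(1)] V z by simp
  then have "(V * adj V * M) *\<^sub>v x = V *\<^sub>v z"
    using assoc_mult_mat_vec[OF mult_carrier_mat[OF V(1) adj_carrier[OF V(1)]] M x]
      assoc_mult_mat_vec[OF V(1) adj_carrier[OF V(1)] mult_mat_vec_carrier[OF V(1) z(1)]] z by simp
  also have "\<dots> = M *\<^sub>v x" using z by simp
  finally show "(V * adj V * M) *\<^sub>v x = M *\<^sub>v x" .
qed (use V M in auto)

text \<open>Commuting with \<open>G\<close>, the matrix \<open>A\<close> maps \<open>supp G = supp V\<close> into itself.\<close>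

lemma commute_range_invariant:
  assumes V: "V \<in> carrier_mat n m" "adj V * V = 1\<^sub>m m"
    and A: "A \<in> carrier_mat n n" and G: "G \<in> carrier_mat n n"
    and comm: "A * G = G * A" and range: "supp V = supp G"
  shows "A * V = V * (adj V * A * V)"
proof -
  have "supp (A * V) \<subseteq> supp V"
  proof
    fix y assume "y \<in> supp (A * V)"
    then obtain x where x: "x \<in> carrier_vec m" "y = (A * V) *\<^sub>v x"
      using A V by (auto simp: supp_def)
    have "V *\<^sub>v x \<in> supp G" using range x V by (auto simp: supp_def)
    then obtain w where w: "w \<in> carrier_vec n" "V *\<^sub>v x = G *\<^sub>v w"
      using G by (auto simp: supp_def)
    have "y = (G * A) *\<^sub>v w"
      using x w A V G by (simp add: comm[symmetric])
    also have "\<dots> = G *\<^sub>v (A *\<^sub>v w)" using G A w by simp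
    finally show "y \<in> supp V" using range G A w by (auto simp: supp_def)
  qed
  then have "V * adj V * (A * V) = A * V"
    using V A by (intro proj_range_mult) auto
  then show ?thesis
    using V A by (simp add: mult_assoc_dims)
qed

lemma dim_pos_if_tr_sandwich_nonzero:
  assumes "V \<in> carrier_mat n m" "X \<in> carrier_mat m m" "tr (V * X * adj V) \<noteq> 0"
  shows "0 < m"
proof (rule ccontr)
  assume "\<not> 0 < m"
  then have "(V * X * adj V) $$ (i,i) = 0" if "i < n" for i
    using index_sandwich_sum[OF assms(2,1) that that] by simp
  then have "tr (V * X * adj V) = 0"
    using assms(1) by (simp add: tr_def)
  with assms(3) show False ..
qed

section \<open>Embedding and compression channels\<close>

definition compl_proj :: "complex mat \<Rightarrow> complex mat" where
  "compl_proj V = 1\<^sub>m (dim_row V) - V * adj V"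

text \<open>The compression \<open>Y \<mapsto> V\<^sup>\<dagger> Y V\<close> onto the range of an isometry \<open>V\<close>, made trace preserving by
  spreading the discarded weight \<open>tr (Q Y Q)\<close>, \<open>Q = 1 - V V\<^sup>\<dagger>\<close>, uniformly over the target.\<close>

definition compress :: "complex mat \<Rightarrow> complex mat \<Rightarrow> complex mat" where
  "compress V Y = adj V * Y * V
     + (tr (compl_proj V * Y * compl_proj V) / of_nat (dim_col V)) \<cdot>\<^sub>m 1\<^sub>m (dim_col V)"

lemma dim_compl_proj [simp]:
  "dim_row (compl_proj V) = dim_row V" "dim_col (compl_proj V) = dim_row V"
  by (simp_all add: compl_proj_def)

lemma compl_proj_carrier: "V \<in> carrier_mat n m \<Longrightarrow> compl_proj V \<in> carrier_mat n n"
  by (auto intro: carrier_matI)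

lemma adj_compl_proj: "adj (compl_proj V) = compl_proj V"
proof -
  have "V * adj V \<in> carrier_mat (dim_row V) (dim_row V)" by (intro carrier_matI) simp_all
  then show ?thesis
    unfolding compl_proj_def by (simp add: adj_minus[OF one_carrier_mat] adj_mult)
qed

lemma compl_proj_mult_self:
  assumes V: "V \<in> carrier_mat n m" "adj V * V = 1\<^sub>m m"
  shows "compl_proj V * V = 0\<^sub>m n m"
  using V by (simp add: compl_proj_def minus_mult_distrib_mat[where nr = n and n = n and nc = m]
      mult_assoc_dims minus_eq_zero_mat_iff[of _ n m])

lemma compl_proj_idem:
  assumes V: "V \<in> carrier_mat n m" "adj V * V = 1\<^sub>m m"
  shows "compl_proj V * compl_proj V = compl_proj V"
proof -
  have "compl_proj V * (V * adj V) = 0\<^sub>m n n"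
    using compl_proj_mult_self[OF V] V compl_proj_carrier[OF V(1)] by (simp flip: mult_assoc_dims)
  then show ?thesis
    using V compl_proj_carrier[OF V(1)]
    by (simp add: compl_proj_def[of V, symmetric] mult_minus_distrib_mat[where nr = n and n = n and nc = n]
        compl_proj_def[of V])
qed

lemma tr_compl_proj_sandwich:
  assumes V: "V \<in> carrier_mat n m" "adj V * V = 1\<^sub>m m" and Y: "Y \<in> carrier_mat n n"
  shows "tr (compl_proj V * Y * compl_proj V) = tr Y - tr (adj V * Y * V)"
proof -
  let ?Q = "compl_proj V"
  have Q: "?Q \<in> carrier_mat n n" by (rule compl_proj_carrier[OF V(1)])
  have "tr (?Q * Y * ?Q) = tr (?Q * (Y * ?Q))"
    using Q Y by (simp add: mult_assoc_dims)
  also have "\<dots> = tr (Y * ?Q * ?Q)"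
    using tr_mult_comm[OF Q mult_carrier_mat[OF Y Q]] .
  also have "\<dots> = tr (Y * ?Q)"
    using Q Y by (simp add: mult_assoc_dims compl_proj_idem[OF V])
  also have "\<dots> = tr (Y - Y * V * adj V)"
    using Y V by (simp add: compl_proj_def mult_minus_distrib_mat[where nr = n and n = n and nc = n]
        mult_assoc_dims)
  also have "\<dots> = tr Y - tr (Y * V * adj V)"
    using Y V by (intro tr_minus) auto
  also have "tr (Y * V * adj V) = tr (adj V * Y * V)"
    using tr_mult_comm[OF mult_carrier_mat[OF Y V(1)] adj_carrier[OF V(1)]] Y V
    by (simp add: mult_assoc_dims)
  finally show ?thesis .
qed

lemma dim_compress [simp]: "dim_row (compress V Y) = dim_col V" "dim_col (compress V Y) = dim_col V"
  by (simp_all add: compress_def)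

lemma index_compress:
  "i < dim_col V \<Longrightarrow> j < dim_col V \<Longrightarrow> compress V Y $$ (i,j) = (adj V * Y * V) $$ (i,j)
     + (if i = j then tr (compl_proj V * Y * compl_proj V) / of_nat (dim_col V) else 0)"
  by (simp add: compress_def)

lemma compress_eq_if_supported:
  assumes "V \<in> carrier_mat n m" "Y \<in> carrier_mat n n" "compl_proj V * Y = 0\<^sub>m n n"
  shows "compress V Y = adj V * Y * V"
  using assms by (intro eq_matI) (auto simp: index_compress tr_def)

lemma channel_embed:
  assumes V: "V \<in> carrier_mat n m" "adj V * V = 1\<^sub>m m"
  shows "channel m n (\<lambda>X. V * X * adj V)"
proof (rule channelI)
  fix M :: "complex mat" assume M: "M \<in> carrier_mat m m"
  show "V * M * adj V \<in> carrier_mat n n"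
    using carrier_matD[OF V(1)] by (intro carrier_matI) simp_all
  have "tr (V * (M * adj V)) = tr (M * adj V * V)"
    using tr_mult_comm[OF V(1) mult_carrier_mat[OF M adj_carrier[OF V(1)]]] .
  then show "tr (V * M * adj V) = tr M"
    using V M by (simp add: mult_assoc_dims)
next
  fix M N :: "complex mat" assume "M \<in> carrier_mat m m" "N \<in> carrier_mat m m"
  then show "V * (M + N) * adj V = V * M * adj V + V * N * adj V"
    using carrier_matD[OF V(1)] by (simp add: mult_add_distrib_dims)
next
  fix M :: "complex mat" and c assume "M \<in> carrier_mat m m"
  then show "V * (c \<cdot>\<^sub>m M) * adj V = c \<cdot>\<^sub>m (V * M * adj V)"
    using carrier_matD[OF V(1)] by (simp add: mult_smult_dims)
next
  show "completely_positive m n (\<lambda>X. V * X * adj V)"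
    by (rule completely_positive_kraus[of "{()}" "\<lambda>_. V"]) (use V in auto)
qed

lemma cov_channel_embed:
  assumes V: "V \<in> carrier_mat n m" "adj V * V = 1\<^sub>m m"
    and UX: "\<And>g. UX g \<in> carrier_mat m m" and UY: "\<And>g. UY g \<in> carrier_mat n n"
    and intertwine: "\<And>g. UY g * V = V * UX g"
  shows "cov_channel m n UX UY (\<lambda>X. V * X * adj V)"
  unfolding cov_channel_def
proof (intro conjI allI ballI channel_embed[OF V])
  fix g and M :: "complex mat" assume "M \<in> carrier_mat m m"
  then have "V * (UX g * M * adj (UX g)) * adj V = (V * UX g) * M * adj (V * UX g)"
    using carrier_matD[OF V(1)] carrier_matD[OF UX] by (simp add: adj_mult mult_assoc_dims)
  also have "\<dots> = UY g * (V * M * adj V) * adj (UY g)"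
    using \<open>M \<in> carrier_mat m m\<close> carrier_matD[OF V(1)] carrier_matD[OF UY]
    by (simp add: intertwine[symmetric] adj_mult mult_assoc_dims)
  finally show "V * (UX g * M * adj (UX g)) * adj V = UY g * (V * M * adj V) * adj (UY g)" .
qed

lemma index_rank_one_sandwich:
  assumes Q: "Q \<in> carrier_mat n n" and Y: "Y \<in> carrier_mat n n"
    and "r < n" "s < m" "i < m" "j < m"
  shows "(mat m n (\<lambda>(i,k). if i = s then c * Q $$ (r,k) else 0) * Y
            * adj (mat m n (\<lambda>(i,k). if i = s then c * Q $$ (r,k) else 0))) $$ (i,j)
       = (if i = s \<and> j = s then c * cnj c * (Q * Y * adj Q) $$ (r,r) else 0)"
  unfolding index_sandwich_sum[OF Y mat_carrier assms(5,6)] index_sandwich_sum[OF Y Q assms(3,3)]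
  using assms by (auto simp: sum_distrib_left sum_distrib_right mult_ac intro!: sum.cong)

lemma completely_positive_compress:
  assumes V: "V \<in> carrier_mat n m"
  shows "completely_positive n m (compress V)"
proof -
  let ?Q = "compl_proj V" and ?c = "1 / complex_of_real (sqrt (real m))"
  \<comment> \<open>Kraus operators \<open>V\<^sup>\<dagger>\<close> and \<open>e\<^sub>s q\<^sub>r / \<surd>m\<close>, where \<open>q\<^sub>r\<close> is the \<open>r\<close>-th row of \<open>Q\<close>.\<close>
  define K where "K x = (case x of None \<Rightarrow> adj V
      | Some (r, s) \<Rightarrow> mat m n (\<lambda>(i,k). if i = s then ?c * ?Q $$ (r,k) else 0))" for x
  define R where "R = insert None (Some ` ({..<n} \<times> {..<m}))"
  have Q: "?Q \<in> carrier_mat n n" "adj ?Q = ?Q"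
    using compl_proj_carrier[OF V] adj_compl_proj by blast+
  have c: "?c * cnj ?c = 1 / of_nat m"
    by (simp add: divide_simps flip: of_real_mult)
  have "compress V Y $$ (i,j) = (\<Sum>x\<in>R. (K x * Y * adj (K x)) $$ (i,j))"
    if Y: "Y \<in> carrier_mat n n" and ij: "i < m" "j < m" for Y i j
  proof -
    have "(\<Sum>x\<in>R. (K x * Y * adj (K x)) $$ (i,j))
        = (adj V * Y * V) $$ (i,j) + (\<Sum>r<n. \<Sum>s<m. (K (Some (r,s)) * Y * adj (K (Some (r,s)))) $$ (i,j))"
      unfolding R_def by (simp add: sum.reindex inj_on_def sum.cartesian_product' K_def)
    also have "\<dots> = (adj V * Y * V) $$ (i,j)
        + (\<Sum>r<n. \<Sum>s<m. if s = i then (if i = j then (?Q * Y * ?Q) $$ (r,r) / of_nat m else 0) else 0)"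
      by (rule arg_cong2[where f = "(+)"], rule refl, intro sum.cong refl)
        (use ij Q c in \<open>auto simp del: index_mult_mat simp: K_def index_rank_one_sandwich[OF Q(1) Y]\<close>)
    also have "\<dots> = (adj V * Y * V) $$ (i,j)
        + (\<Sum>r<n. if i = j then (?Q * Y * ?Q) $$ (r,r) / of_nat m else 0)"
      using ij by simp
    also have "\<dots> = compress V Y $$ (i,j)"
      using ij V by (simp add: index_compress tr_def sum_divide_distrib)
    finally show ?thesis ..
  qed
  moreover have "K x \<in> carrier_mat m n" if "x \<in> R" for x
    using that V by (auto simp: K_def R_def)
  ultimately show ?thesis
    using completely_positive_kraus[of R K m n "compress V"] by (simp add: R_def)
qed

lemma compress_add:
  assumes V: "V \<in> carrier_mat n m" and M: "M \<in> carrier_mat n n" and N: "N \<in> carrier_mat n n"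
  shows "compress V (M + N) = compress V M + compress V N"
proof -
  have QXQ: "compl_proj V * X * compl_proj V \<in> carrier_mat n n" if "X \<in> carrier_mat n n" for X
    using that V by (intro carrier_matI) auto
  have "tr (compl_proj V * (M + N) * compl_proj V)
      = tr (compl_proj V * M * compl_proj V) + tr (compl_proj V * N * compl_proj V)"
    using V M N by (simp add: mult_add_distrib_dims tr_add[OF QXQ[OF M] QXQ[OF N]])
  then show ?thesis
    using V M N by (intro eq_matI) (auto simp: index_compress mult_add_distrib_dims add_divide_distrib)
qed

lemma compress_smult:
  assumes V: "V \<in> carrier_mat n m" and M: "M \<in> carrier_mat n n"
  shows "compress V (c \<cdot>\<^sub>m M) = c \<cdot>\<^sub>m compress V M"
proof -
  have "compl_proj V * M * compl_proj V \<in> carrier_mat n n"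
    using V M by (intro carrier_matI) auto
  then have "tr (compl_proj V * (c \<cdot>\<^sub>m M) * compl_proj V) = c * tr (compl_proj V * M * compl_proj V)"
    using V M by (simp add: mult_smult_dims tr_smult)
  then show ?thesis
    using V M by (intro eq_matI) (auto simp: index_compress mult_smult_dims algebra_simps)
qed

lemma channel_compress:
  assumes V: "V \<in> carrier_mat n m" "adj V * V = 1\<^sub>m m" and m: "0 < m"
  shows "channel n m (compress V)"
proof (rule channelI)
  fix M :: "complex mat" assume M: "M \<in> carrier_mat n n"
  have "adj V * M * V \<in> carrier_mat m m"
    using V M by (intro carrier_matI) auto
  then have "tr (compress V M) = tr (adj V * M * V) + tr (compl_proj V * M * compl_proj V)"
    using m V by (simp add: compress_def tr_add[OF _ smult_carrier_mat[OF one_carrier_mat]]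
        tr_smult[OF one_carrier_mat] tr_one)
  then show "tr (compress V M) = tr M"
    using tr_compl_proj_sandwich[OF V M] by simp
qed (use V completely_positive_compress compress_add compress_smult in \<open>auto intro: carrier_matI\<close>)

lemma cov_channel_compress:
  assumes V: "V \<in> carrier_mat n m" "adj V * V = 1\<^sub>m m" and m: "0 < m"
    and UX: "\<And>g. unitary m (UX g)" and UY: "\<And>g. unitary n (UY g)"
    and intertwine: "\<And>g. adj V * UY g = UX g * adj V"
  shows "cov_channel n m UY UX (compress V)"
  unfolding cov_channel_def
proof (intro conjI allI ballI channel_compress[OF V m])
  fix g and Y :: "complex mat" assume Y: "Y \<in> carrier_mat n n"
  have dims: "dim_row (UX g) = m" "dim_col (UX g) = m" "dim_row (UY g) = n" "dim_col (UY g) = n"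
    using UX UY by (auto simp: unitary_def)
  have "adj (adj V * UY g) = adj (UX g * adj V)"
    by (simp only: intertwine)
  then have "adj (UY g) * V = V * adj (UX g)"
    using carrier_matD[OF V(1)] dims by (simp add: adj_mult)
  moreover have "adj V * (UY g * X) = UX g * (adj V * X)" if "dim_row X = n" for X
    using that carrier_matD[OF V(1)] dims by (simp add: intertwine flip: mult_assoc_dims)
  ultimately have compr: "adj V * (UY g * Y * adj (UY g)) * V = UX g * (adj V * Y * V) * adj (UX g)"
    using V Y dims by (simp add: mult_assoc_dims)
  have "UY g * Y * adj (UY g) \<in> carrier_mat n n" "adj V * Y * V \<in> carrier_mat m m"
    using Y V dims by (auto intro!: carrier_matI)
  then have "tr (compl_proj V * (UY g * Y * adj (UY g)) * compl_proj V) = tr (compl_proj V * Y * compl_proj V)"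
    using Y by (simp add: tr_compl_proj_sandwich[OF V] compr tr_unitary_sandwich[OF UY]
        tr_unitary_sandwich[OF UX])
  then have "compress V (UY g * Y * adj (UY g))
      = UX g * (adj V * Y * V) * adj (UX g) + (tr (compl_proj V * Y * compl_proj V) / of_nat m) \<cdot>\<^sub>m 1\<^sub>m m"
    using carrier_matD[OF V(1)] by (simp only: compress_def compr)
  also have "\<dots> = UX g * compress V Y * adj (UX g)"
    using V Y dims unitary_mult_adj[OF UX]
    by (simp add: compress_def mult_add_distrib_dims mult_smult_dims mult_assoc_dims)
  finally show "compress V (UY g * Y * adj (UY g)) = UX g * compress V Y * adj (UX g)" .
qed

section \<open>Haar measure and twirling\<close>

locale compact_haar_group =
  fixes \<mu> :: "'g::{group_add, t2_space} measure"
  assumes compact_UNIV: "compact (UNIV :: 'g set)"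
    and add_continuous: "continuous_on UNIV (\<lambda>p :: 'g \<times> 'g. fst p + snd p)"
    and haar: "haar_prob \<mu>"
begin

sublocale prob_space \<mu>
  using haar by (simp add: haar_prob_def)

lemma sets_haar: "sets \<mu> = sets borel"
  using haar by (simp add: haar_prob_def)

lemma space_haar: "space \<mu> = UNIV"
  using sets_eq_imp_space_eq[OF sets_haar] by simp

lemma distr_translate: "distr \<mu> \<mu> (\<lambda>g. h + g) = \<mu>"
  using haar by (simp add: haar_prob_def)

lemma borel_measurable_continuous: "continuous_on UNIV f \<Longrightarrow> f \<in> borel_measurable \<mu>"
  using borel_measurable_continuous_onI measurable_cong_sets[OF sets_haar refl] by metis

lemma integrable_continuous:
  fixes f :: "'g \<Rightarrow> 'b::{banach, second_countable_topology}"
  assumes "continuous_on UNIV f"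
  shows "integrable \<mu> f"
proof -
  obtain B where "\<forall>x \<in> range f. norm x \<le> B"
    using compact_continuous_image[OF assms compact_UNIV] compact_imp_bounded bounded_iff by metis
  then show ?thesis
    by (intro integrable_const_bound[where B = B]) (auto simp: borel_measurable_continuous[OF assms])
qed

lemma continuous_translate: "continuous_on UNIV (\<lambda>g::'g. h + g)"
proof -
  have "continuous_on UNIV ((\<lambda>p :: 'g \<times> 'g. fst p + snd p) \<circ> (\<lambda>g. (h, g)))"
    by (intro continuous_on_compose continuous_on_Pair continuous_on_const continuous_on_id
        continuous_on_subset[OF add_continuous]) simp
  then show ?thesis by (simp add: o_def)
qed

lemma measurable_translate: "(\<lambda>g::'g. h + g) \<in> measurable \<mu> \<mu>"
  using borel_measurable_continuous_onI[OF continuous_translate]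
    measurable_cong_sets[OF sets_haar sets_haar] by metis

lemma integral_translate:
  fixes f :: "'g \<Rightarrow> 'b::{banach, second_countable_topology}"
  assumes "continuous_on UNIV f"
  shows "(\<integral>g. f (h + g) \<partial>\<mu>) = integral\<^sup>L \<mu> f"
  using integral_distr[OF measurable_translate borel_measurable_continuous[OF assms]]
  by (simp add: distr_translate)

text \<open>The Haar measure has full support: if the open set where \<open>f \<noteq> 0\<close> were null, so would be
  all its translates, and finitely many of them cover the compact group.\<close>

lemma continuous_nonneg_integral_eq_zero:
  fixes f :: "'g \<Rightarrow> real"
  assumes cont: "continuous_on UNIV f" and nonneg: "\<And>x. 0 \<le> f x" and zero: "integral\<^sup>L \<mu> f = 0"
  shows "f x = 0"
proof (rule ccontr)
  assume "f x \<noteq> 0"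
  define T where "T h = (\<lambda>g. h + g) -` (f -` (- {0}))" for h
  have open_support: "open (f -` (- {0}))"
    using cont by (auto simp: continuous_on_open_vimage[OF open_UNIV])
  then have open_T: "open (T h)" for h
    using continuous_translate by (auto simp: T_def continuous_on_open_vimage[OF open_UNIV])
  have "AE g in \<mu>. f g = 0"
    using integral_nonneg_eq_0_iff_AE[OF integrable_continuous[OF cont]] nonneg zero by simp
  moreover have "{g \<in> space \<mu>. f g \<noteq> 0} = T 0" by (auto simp: T_def space_haar)
  ultimately have "emeasure \<mu> (T 0) = 0"
    using AE_iff_measurable[of "T 0" \<mu> "\<lambda>g. f g = 0"] open_T[of 0] sets_haar by (auto intro: borel_open)
  then have null_T: "emeasure \<mu> (T h) = 0" for h
    using emeasure_distr[OF measurable_translate, of "T 0" h] borel_open[OF open_support] sets_haar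
    by (simp add: distr_translate T_def space_haar)
  have "UNIV \<subseteq> (\<Union>h. T h)"
  proof
    fix g :: 'g
    have "g \<in> T (x - g)" using \<open>f x \<noteq> 0\<close> by (simp add: T_def)
    then show "g \<in> (\<Union>h. T h)" by blast
  qed
  then obtain C where C: "C \<subseteq> range T" "finite C" "UNIV \<subseteq> \<Union> C"
    using compactE[OF compact_UNIV, of "range T"] open_T by blast
  have "emeasure \<mu> (\<Union>B\<in>C. B) \<le> (\<Sum>B\<in>C. emeasure \<mu> B)"
    by (rule emeasure_subadditive_finite[OF C(2)]) (use C open_T sets_haar in auto)
  also have "\<dots> = 0" using C null_T by (intro sum.neutral) auto
  finally have "emeasure \<mu> UNIV = 0" using C(3) by (simp add: top_unique)
  then show False using emeasure_space_1 space_haar by simp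
qed

end

lemma integral_sum_sum:
  fixes f :: "'i \<Rightarrow> 'j \<Rightarrow> 'a \<Rightarrow> 'b::{banach, second_countable_topology}"
  assumes "\<And>i j. i \<in> I \<Longrightarrow> j \<in> J \<Longrightarrow> integrable M (f i j)"
  shows "(\<integral>x. (\<Sum>i\<in>I. \<Sum>j\<in>J. f i j x) \<partial>M) = (\<Sum>i\<in>I. \<Sum>j\<in>J. integral\<^sup>L M (f i j))"
  using assms by (simp add: Bochner_Integration.integral_sum integrable_sum)

locale compact_group_rep = compact_haar_group \<mu> for \<mu> :: "'g::{group_add, t2_space} measure" +
  fixes U :: "'g \<Rightarrow> complex mat" and d :: nat
  assumes rep: "unitary_rep d U"
begin

lemma U_carrier [simp]: "U g \<in> carrier_mat d d"
  using rep by (simp add: unitary_rep_def)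

lemma dim_U [simp]: "dim_row (U g) = d" "dim_col (U g) = d"
  using U_carrier by blast+

lemma U_unitary: "unitary d (U g)"
  using rep by (simp add: unitary_rep_def unitary_def)

lemma U_add: "U (g + h) = U g * U h"
  using rep by (simp add: unitary_rep_def)

lemma U_zero: "U 0 = 1\<^sub>m d"
proof -
  have "U 0 = adj (U 0) * U 0 * U 0"
    using U_unitary[of 0] by (simp add: unitary_def left_mult_one_mat[OF U_carrier])
  also have "\<dots> = adj (U 0) * U 0"
    by (simp add: mult_assoc_dims flip: U_add)
  finally show ?thesis using U_unitary[of 0] by (simp add: unitary_def)
qed

lemma U_uminus: "U (- g) = adj (U g)"
proof -
  have "adj (U g) = U (- g) * U g * adj (U g)"
    by (simp add: U_zero left_mult_one_mat[OF adj_carrier[OF U_carrier]] flip: U_add)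
  also have "\<dots> = U (- g)"
    using unitary_mult_adj[OF U_unitary] by (simp add: mult_assoc_dims right_mult_one_mat[OF U_carrier])
  finally show ?thesis ..
qed

lemma continuous_sandwich_entry:
  assumes "\<sigma> \<in> carrier_mat d d" "i < d" "j < d"
  shows "continuous_on UNIV (\<lambda>g. (U g * \<sigma> * adj (U g)) $$ (i,j))"
  using rep assms unfolding index_sandwich_sum[OF assms(1) U_carrier assms(2,3)] unitary_rep_def
  by (intro continuous_on_sum continuous_on_mult continuous_on_const continuous_on_cnj) auto

lemma twirl_carrier: "\<sigma> \<in> carrier_mat d d \<Longrightarrow> twirl \<mu> U \<sigma> \<in> carrier_mat d d"
  by (simp add: twirl_def)

lemma index_twirl:
  "\<sigma> \<in> carrier_mat d d \<Longrightarrow> i < d \<Longrightarrow> j < d \<Longrightarrow>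
    twirl \<mu> U \<sigma> $$ (i,j) = (\<integral>g. (U g * \<sigma> * adj (U g)) $$ (i,j) \<partial>\<mu>)"
  by (simp add: twirl_def)

lemma sandwich_U_add:
  assumes "\<sigma> \<in> carrier_mat d d"
  shows "U h * (U g * \<sigma> * adj (U g)) * adj (U h) = U (h + g) * \<sigma> * adj (U (h + g))"
  using carrier_matD[OF assms] by (simp add: U_add adj_mult mult_assoc_dims)

lemma sandwich_twirl:
  assumes \<sigma>: "\<sigma> \<in> carrier_mat d d"
  shows "U h * twirl \<mu> U \<sigma> * adj (U h) = twirl \<mu> U \<sigma>"
proof (rule eq_matI)
  let ?G = "twirl \<mu> U \<sigma>" and ?S = "\<lambda>g. U g * \<sigma> * adj (U g)"
  fix i j assume "i < dim_row ?G" "j < dim_col ?G"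
  then have ij: "i < d" "j < d" using twirl_carrier[OF \<sigma>] by auto
  have S: "?S g \<in> carrier_mat d d" for g
    using mult_carrier_mat[OF mult_carrier_mat[OF U_carrier \<sigma>] adj_carrier[OF U_carrier]] .
  have int: "integrable \<mu> (\<lambda>g. U h $$ (i,k) * ?S g $$ (k,l) * cnj (U h $$ (j,l)))"
    if "k < d" "l < d" for k l
    using integrable_continuous[OF continuous_sandwich_entry[OF \<sigma> that]]
    by (intro integrable_mult_left integrable_mult_right)
  have "(U h * ?G * adj (U h)) $$ (i,j)
      = (\<Sum>l<d. \<Sum>k<d. \<integral>g. U h $$ (i,k) * ?S g $$ (k,l) * cnj (U h $$ (j,l)) \<partial>\<mu>)"
    unfolding index_sandwich_sum[OF twirl_carrier[OF \<sigma>] U_carrier ij]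
    by (auto simp: index_twirl[OF \<sigma>] sum_distrib_right intro!: sum.cong)
  also have "\<dots> = (\<integral>g. (\<Sum>l<d. \<Sum>k<d. U h $$ (i,k) * ?S g $$ (k,l) * cnj (U h $$ (j,l))) \<partial>\<mu>)"
    by (rule integral_sum_sum[symmetric]) (use int in auto)
  also have "\<dots> = (\<integral>g. (U h * ?S g * adj (U h)) $$ (i,j) \<partial>\<mu>)"
    by (simp only: index_sandwich_sum[OF S U_carrier ij] sum_distrib_right)
  also have "\<dots> = (\<integral>g. ?S (h + g) $$ (i,j) \<partial>\<mu>)"
    by (simp only: sandwich_U_add[OF \<sigma>])
  also have "\<dots> = ?G $$ (i,j)"
    using integral_translate[OF continuous_sandwich_entry[OF \<sigma> ij]] by (simp add: index_twirl[OF \<sigma> ij])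
  finally show "(U h * ?G * adj (U h)) $$ (i,j) = ?G $$ (i,j)" .
qed (use twirl_carrier[OF \<sigma>] in auto)

lemma twirl_commute:
  assumes \<sigma>: "\<sigma> \<in> carrier_mat d d"
  shows "U h * twirl \<mu> U \<sigma> = twirl \<mu> U \<sigma> * U h"
proof -
  have "U h * twirl \<mu> U \<sigma> = U h * twirl \<mu> U \<sigma> * (adj (U h) * U h)"
    using U_unitary carrier_matD[OF twirl_carrier[OF \<sigma>]]
    by (simp add: unitary_def right_mult_one_mat[OF twirl_carrier[OF \<sigma>]])
  also have "\<dots> = twirl \<mu> U \<sigma> * U h"
    using carrier_matD[OF twirl_carrier[OF \<sigma>]] by (simp add: sandwich_twirl[OF \<sigma>] flip: mult_assoc_dims)
  finally show ?thesis .
qed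

lemma sesq_twirl:
  assumes \<sigma>: "\<sigma> \<in> carrier_mat d d"
  shows "sesq d (twirl \<mu> U \<sigma>) f f = (\<integral>g. sesq d (U g * \<sigma> * adj (U g)) f f \<partial>\<mu>)"
proof -
  have int: "integrable \<mu> (\<lambda>g. cnj (f i) * (U g * \<sigma> * adj (U g)) $$ (i,j) * f j)"
    if "i < d" "j < d" for i j
    using integrable_continuous[OF continuous_sandwich_entry[OF \<sigma> that]]
    by (intro integrable_mult_left integrable_mult_right)
  have "(\<integral>g. sesq d (U g * \<sigma> * adj (U g)) f f \<partial>\<mu>)
      = (\<Sum>i<d. \<Sum>j<d. \<integral>g. cnj (f i) * (U g * \<sigma> * adj (U g)) $$ (i,j) * f j \<partial>\<mu>)"
    unfolding sesq_def by (rule integral_sum_sum) (use int in auto)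
  also have "\<dots> = sesq d (twirl \<mu> U \<sigma>) f f"
    unfolding sesq_def by (auto simp: index_twirl[OF \<sigma>] intro!: sum.cong)
  finally show ?thesis ..
qed

lemma sesq_twirl_eq_zero:
  assumes \<sigma>: "psd d \<sigma>" and null: "sesq d (twirl \<mu> U \<sigma>) f f = 0"
  shows "sesq d \<sigma> f f = 0"
proof -
  have \<sigma>': "\<sigma> \<in> carrier_mat d d" using \<sigma> by (simp add: psd_def)
  define \<psi> where "\<psi> g = sesq d (U g * \<sigma> * adj (U g)) f f" for g
  have cont: "continuous_on UNIV \<psi>"
    unfolding \<psi>_def sesq_def
    by (intro continuous_on_sum continuous_on_mult continuous_on_const continuous_sandwich_entry[OF \<sigma>']) auto
  have nonneg: "nonneg_complex (\<psi> g)" for g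
    using psd_sandwich[OF \<sigma> U_carrier] unfolding \<psi>_def psd_iff_sesq by blast
  have "integral\<^sup>L \<mu> (\<lambda>g. Re (\<psi> g)) = Re (integral\<^sup>L \<mu> \<psi>)"
    by (rule integral_Re[OF integrable_continuous[OF cont]])
  also have "\<dots> = 0" using null sesq_twirl[OF \<sigma>'] by (simp add: \<psi>_def[abs_def])
  finally have "Re (\<psi> 0) = 0"
    using nonneg by (intro continuous_nonneg_integral_eq_zero[OF continuous_on_Re[OF cont]])
      (auto simp: nonneg_complex_def)
  moreover have "\<psi> 0 = sesq d \<sigma> f f"
    using \<sigma>' by (simp add: \<psi>_def U_zero left_mult_one_mat right_mult_one_mat)
  ultimately show ?thesis using nonneg[of 0] by (simp add: nonneg_complex_def complex_eq_iff)
qed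

lemma mult_eq_zero_if_mult_twirl_eq_zero:
  assumes \<sigma>: "psd d \<sigma>" and K: "K \<in> carrier_mat d' d" and KG: "K * twirl \<mu> U \<sigma> = 0\<^sub>m d' d"
  shows "K * \<sigma> = 0\<^sub>m d' d" "\<sigma> * adj K = 0\<^sub>m d d'"
proof -
  have \<sigma>': "\<sigma> \<in> carrier_mat d d" using \<sigma> by (simp add: psd_def)
  have "sesq d' (K * \<sigma> * adj K) f f = 0" for f
  proof -
    have "K * twirl \<mu> U \<sigma> * adj K = 0\<^sub>m d' d'"
      using K by (simp add: KG)
    then have "sesq d' (K * twirl \<mu> U \<sigma> * adj K) f f = 0"
      by (simp add: sesq_def)
    then show ?thesis
      using sesq_twirl_eq_zero[OF \<sigma>] by (simp add: sesq_sandwich[OF \<sigma>' K] sesq_sandwich[OF twirl_carrier[OF \<sigma>'] K])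
  qed
  then show "K * \<sigma> = 0\<^sub>m d' d" "\<sigma> * adj K = 0\<^sub>m d d'"
    using psd_sandwich_eq_zero[OF \<sigma> K] by blast+
qed

lemma twirl_support_intertwines:
  assumes \<sigma>: "\<sigma> \<in> carrier_mat d d"
    and V: "V \<in> carrier_mat d m" "adj V * V = 1\<^sub>m m" and range: "supp V = supp (twirl \<mu> U \<sigma>)"
  shows "U g * V = V * (adj V * U g * V)"
    and "adj V * U g = (adj V * U g * V) * adj V"
    and "unitary m (adj V * U g * V)"
proof -
  have inv: "U h * V = V * (adj V * U h * V)" for h
    using commute_range_invariant[OF V U_carrier twirl_carrier[OF \<sigma>] twirl_commute[OF \<sigma>] range] .
  then show "U g * V = V * (adj V * U g * V)" .
  have "adj V * U g = adj (adj (U g) * V)"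
    using carrier_matD[OF V(1)] by (simp add: adj_mult)
  also have "\<dots> = adj (V * (adj V * adj (U g) * V))"
    using inv[of "- g"] by (simp add: U_uminus)
  also have "\<dots> = (adj V * U g * V) * adj V"
    using carrier_matD[OF V(1)] by (simp add: adj_mult mult_assoc_dims)
  finally show "adj V * U g = (adj V * U g * V) * adj V" .
  have "adj (adj V * U g * V) * (adj V * U g * V) = adj V * adj (U g) * (V * (adj V * U g * V))"
    using carrier_matD[OF V(1)] by (simp add: adj_mult mult_assoc_dims)
  also have "\<dots> = adj V * adj (U g) * (U g * V)"
    by (simp only: inv)
  also have "\<dots> = 1\<^sub>m m"
    using carrier_matD[OF V(1)] V(2) by (simp add: mult_assoc_dims unitary_adj_mult_cancel[OF U_unitary])
  finally show "unitary m (adj V * U g * V)"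
    using carrier_matD[OF V(1)] by (auto simp: unitary_def intro!: carrier_matI)
qed

lemma twirl_support_proj:
  assumes \<sigma>: "psd d \<sigma>"
    and V: "V \<in> carrier_mat d m" "adj V * V = 1\<^sub>m m" and range: "supp V = supp (twirl \<mu> U \<sigma>)"
  shows "compl_proj V * \<sigma> = 0\<^sub>m d d" "V * (adj V * \<sigma> * V) * adj V = \<sigma>"
proof -
  let ?P = "V * adj V" and ?Q = "compl_proj V" and ?G = "twirl \<mu> U \<sigma>"
  have \<sigma>': "\<sigma> \<in> carrier_mat d d" using \<sigma> by (simp add: psd_def)
  have P: "?P \<in> carrier_mat d d" and Q: "?Q \<in> carrier_mat d d"
    using V by (auto simp: compl_proj_carrier)
  have "?P * ?G = ?G"
    using V twirl_carrier[OF \<sigma>'] range by (intro proj_range_mult) auto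
  then have "?Q * ?G = 0\<^sub>m d d"
    using P V twirl_carrier[OF \<sigma>']
    by (simp add: compl_proj_def minus_mult_distrib_mat[where nr = d and n = d and nc = d])
  from mult_eq_zero_if_mult_twirl_eq_zero[OF \<sigma> Q this]
  have "?Q * \<sigma> = 0\<^sub>m d d" "\<sigma> * ?Q = 0\<^sub>m d d"
    by (simp_all add: adj_compl_proj)
  then show "?Q * \<sigma> = 0\<^sub>m d d" by blast
  from \<open>\<sigma> * ?Q = 0\<^sub>m d d\<close> \<open>?Q * \<sigma> = 0\<^sub>m d d\<close> have "\<sigma> - ?P * \<sigma> = 0\<^sub>m d d" "\<sigma> - \<sigma> * ?P = 0\<^sub>m d d"
    using P V \<sigma>' by (simp_all add: compl_proj_def minus_mult_distrib_mat[where nr = d and n = d and nc = d]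
        mult_minus_distrib_mat[where nr = d and n = d and nc = d])
  then have "?P * \<sigma> = \<sigma>" "\<sigma> * ?P = \<sigma>"
    using P \<sigma>' by (simp_all add: minus_eq_zero_mat_iff[of _ d d])
  then show "V * (adj V * \<sigma> * V) * adj V = \<sigma>"
    using V \<sigma>' by (simp add: mult_assoc_dims)
qed

end

theorem lemma7:
  fixes \<mu> :: "'g::{group_add, t2_space} measure"
    and UA UB :: "'g \<Rightarrow> complex mat"
    and dA dB dS :: nat
    and \<rho> \<sigma> V :: "complex mat"
  assumes cpt: "compact (UNIV :: 'g set)"
    and mult_cont: "continuous_on UNIV (\<lambda>p :: 'g \<times> 'g. fst p + snd p)"
    and inv_cont: "continuous_on UNIV (uminus :: 'g \<Rightarrow> 'g)"
    and haar: "haar_prob \<mu>"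
    and repA: "unitary_rep dA UA"
    and repB: "unitary_rep dB UB"
    and rho: "state dA \<rho>"
    and sigma: "state dB \<sigma>"
    and V_dim: "V \<in> carrier_mat dB dS"
    and V_iso: "adj V * V = 1\<^sub>m dS"
    and V_range: "supp V = supp (twirl \<mu> UB \<sigma>)"
  shows "(\<exists>\<Phi>. cov_channel dA dB UA UB \<Phi> \<and> \<Phi> \<rho> = \<sigma>) \<longleftrightarrow>
         (\<exists>\<Psi>. cov_channel dA dS UA (\<lambda>g. adj V * UB g * V) \<Psi> \<and> \<Psi> \<rho> = adj V * \<sigma> * V)"
proof -
  interpret compact_group_rep \<mu> UB dB
    by unfold_locales (rule cpt mult_cont haar repB)+
  define W where "W = (\<lambda>g. adj V * UB g * V)"
  have \<sigma>: "psd dB \<sigma>" "\<sigma> \<in> carrier_mat dB dB" "tr \<sigma> = 1"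
    using sigma by (auto simp: state_def psd_def)
  note intertwine = twirl_support_intertwines[OF \<sigma>(2) V_dim V_iso V_range]
  note supported = twirl_support_proj[OF \<sigma>(1) V_dim V_iso V_range]
  have "adj V * \<sigma> * V \<in> carrier_mat dS dS"
    using V_dim \<sigma> by (intro carrier_matI) auto
  then have "0 < dS"
    using supported(2) \<sigma>(3) by (intro dim_pos_if_tr_sandwich_nonzero[OF V_dim]) auto
  have embed: "cov_channel dS dB W UB (\<lambda>X. V * X * adj V)"
    using intertwine by (intro cov_channel_embed[OF V_dim V_iso]) (auto simp: unitary_def W_def)
  have compress: "cov_channel dB dS UB W (compress V)"
    using intertwine U_unitary by (intro cov_channel_compress[OF V_dim V_iso \<open>0 < dS\<close>]) (auto simp: W_def)
  have "compress V \<sigma> = adj V * \<sigma> * V"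
    by (rule compress_eq_if_supported[OF V_dim \<sigma>(2) supported(1)])
  then show ?thesis
    unfolding W_def[symmetric]
    using cov_channel_comp[OF _ compress] cov_channel_comp[OF _ embed] supported(2)
    by (metis comp_apply)
qed

end
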